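(* Let $d\ge 2$ and $n\ge1$, and let $H$ be a Latin hypercube of dimension $d-1$ and order $n$ (equivalently $H=\mathcal H(P)$ for some $1$-permutation matrix $P\in\Lambda_1(d,n)$). Let $T=\{\alpha_1,\dots,\alpha_n\}$ be a transversal of $H$. Then \[\sum_{i=1}^n \Delta(\alpha_i)\equiv\begin{cases} 0 \pmod n&\text{if } n \text{ is odd or } d \text{ is even,}\\ n/2 \pmod n&\text{otherwise}.\end{cases}\]
   Context: Let $I_n=\{1,\dots,n\}$. A Latin hypercube of dimension $m$ and order $n$ is a function $H:I_n^m\to I_n$ such that along every line (varying one coordinate while fixing the others) each symbol of $I_n$ appears exactly once. A $1$-permutation matrix $P\in\Lambda_1(d,n)$ is a $(0,1)$-valued function on $I_n^d$ with exactly one $1$ in each line; it corresponds to the Latin hypercube $\mathcal H(P)$ of dimension $d-1$ with $\mathcal H(P)(i_1,\dots,i_{d-1})=i_d$ iff $P(i_1,\dots,i_d)=1$. A transversal of a Latin hypercube $H$ of dimension $m$ and order $n$ is a selection of $n$ cells of $H$, any two of which differ in every coordinate and contain different symbols. For a cell $\alpha$ at position $(i_1,\dots,i_m)$ of $H$ containing symbol $e=H(i_1,\dots,i_m)$, the Delta function is $\Delta(\alpha)\equiv e-i_1-\cdots-i_m \pmod n$. *)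

theory Defs
  imports Main "HOL-Number_Theory.Cong"
begin

definition cells :: "nat \<Rightarrow> nat \<Rightarrow> nat list set" where
  "cells n m = {x. length x = m \<and> set x \<subseteq> {1..n}}"

definition latin_hypercube :: "nat \<Rightarrow> nat \<Rightarrow> (nat list \<Rightarrow> nat) \<Rightarrow> bool" where
  "latin_hypercube m n H \<longleftrightarrow>
     (\<forall>x\<in>cells n m. H x \<in> {1..n}) \<and>
     (\<forall>x\<in>cells n m. \<forall>k<m. bij_betw (\<lambda>j. H (x[k := j])) {1..n} {1..n})"

definition transversal :: "nat \<Rightarrow> nat \<Rightarrow> (nat list \<Rightarrow> nat) \<Rightarrow> nat list set \<Rightarrow> bool" where
  "transversal m n H T \<longleftrightarrow>
     T \<subseteq> cells n m \<and> card T = n \<and>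
     (\<forall>a\<in>T. \<forall>b\<in>T. a \<noteq> b \<longrightarrow> (\<forall>k<m. a ! k \<noteq> b ! k) \<and> H a \<noteq> H b)"

definition Delta :: "nat \<Rightarrow> (nat list \<Rightarrow> nat) \<Rightarrow> nat list \<Rightarrow> int" where
  "Delta n H x = (int (H x) - (\<Sum>k<length x. int (x ! k))) mod int n"

end

theory Submission
  imports Defs
begin

text \<open>The symbols of a transversal, and each of its coordinates, run through a permutation of
  \<open>{1..n}\<close>, so modulo \<open>n\<close> the Deltas sum to \<open>(1 - m) n (n + 1)/2\<close> for a hypercube of dimension
  \<open>m = d - 1\<close>. Now \<open>n (n + 1)/2\<close> is \<open>0\<close> or \<open>n/2\<close> modulo \<open>n\<close> according to the parity of \<open>n\<close>, and
  its double vanishes, so the factor \<open>1 - m\<close> only matters through its parity.\<close>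

lemma sum_inj_on_card_eq:
  assumes "finite A" "inj_on f T" "f ` T \<subseteq> A" "card T = card A"
  shows "(\<Sum>x\<in>T. g (f x)) = (\<Sum>y\<in>A. g y)"
proof -
  have "f ` T = A"
    using assms by (metis card_image card_subset_eq)
  then show ?thesis
    using sum.reindex[OF assms(2), of g] by simp
qed

lemma transversal_symbol_sum:
  assumes "latin_hypercube m n H" "transversal m n H T"
  shows "(\<Sum>a\<in>T. H a) = \<Sum>{1..n}"
proof -
  have "H ` T \<subseteq> {1..n}" "inj_on H T"
    using assms unfolding latin_hypercube_def transversal_def by (auto simp: inj_on_def)
  then show ?thesis
    using assms(2) sum_inj_on_card_eq[of "{1..n}" H T id] by (simp add: transversal_def)
qed

lemma transversal_coordinate_sum:
  assumes "transversal m n H T" "k < m"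
  shows "(\<Sum>a\<in>T. a ! k) = \<Sum>{1..n}"
proof -
  have "(\<lambda>a. a ! k) ` T \<subseteq> {1..n}"
    using assms nth_mem[of k] unfolding transversal_def cells_def by fastforce
  moreover have "inj_on (\<lambda>a. a ! k) T"
    using assms unfolding transversal_def by (auto simp: inj_on_def)
  ultimately show ?thesis
    using assms(1) sum_inj_on_card_eq[of "{1..n}" "\<lambda>a. a ! k" T id]
    by (simp add: transversal_def)
qed

lemma transversal_Delta_sum_cong:
  assumes "latin_hypercube m n H" "transversal m n H T"
  shows "[(\<Sum>a\<in>T. Delta n H a) = (1 - int m) * int (\<Sum>{1..n})] (mod int n)"
proof -
  define S where "S = int (\<Sum>{1..n})"
  have len: "length a = m" if "a \<in> T" for a
    using assms(2) that unfolding transversal_def cells_def by auto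
  have "[(\<Sum>a\<in>T. Delta n H a) = (\<Sum>a\<in>T. int (H a) - (\<Sum>k<m. int (a ! k)))] (mod int n)"
    unfolding Delta_def by (rule cong_sum) (simp add: cong_def len)
  also have "(\<Sum>a\<in>T. int (H a) - (\<Sum>k<m. int (a ! k)))
           = int (\<Sum>a\<in>T. H a) - (\<Sum>k<m. int (\<Sum>a\<in>T. a ! k))"
    by (simp add: sum_subtractf sum.swap[of _ T])
  also have "\<dots> = S - int m * S"
    using transversal_symbol_sum[OF assms] transversal_coordinate_sum[OF assms(2)]
    by (simp add: S_def)
  finally show ?thesis
    by (simp add: S_def algebra_simps)
qed

lemma double_triangular_eq: "2 * int (\<Sum>{1..n}) = int n * (int n + 1)"
proof -
  have "2 * \<Sum>{1..n} = n * (n + 1)"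
    by (induction n) simp_all
  then show ?thesis
    by (metis of_nat_1 of_nat_add of_nat_mult of_nat_numeral)
qed

lemma triangular_cong:
  "[int (\<Sum>{1..n}) = (if odd n then 0 else int n div 2)] (mod int n)"
proof (cases "odd n")
  case True
  then obtain k where "n = 2 * k + 1"
    by (metis oddE)
  then have "int (\<Sum>{1..n}) = int n * (int k + 1)"
    using double_triangular_eq[of n] by (simp add: algebra_simps)
  with True show ?thesis
    by (simp add: cong_0_iff)
next
  case False
  then obtain k where k: "n = 2 * k"
    by blast
  then have "int (\<Sum>{1..n}) - int n div 2 = int n * int k"
    using double_triangular_eq[of n] by (simp add: algebra_simps)
  with False show ?thesis
    by (simp add: cong_iff_dvd_diff)
qed

lemma mult_triangular_cong:
  "[(1 - int m) * int (\<Sum>{1..n}) = (if odd n \<or> odd m then 0 else int n div 2)] (mod int n)"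
proof (cases "odd m")
  case True
  then obtain j where "m = 2 * j + 1"
    by (metis oddE)
  then have "(1 - int m) * int (\<Sum>{1..n}) = int n * (- int j * (int n + 1))"
    using double_triangular_eq[of n] by (simp add: algebra_simps)
  with True show ?thesis
    by (simp add: cong_0_iff)
next
  case False
  then obtain j where "m = 2 * j"
    by blast
  then have "(1 - int m) * int (\<Sum>{1..n}) = int (\<Sum>{1..n}) - int n * (int j * (int n + 1))"
    using double_triangular_eq[of n] by (simp add: algebra_simps)
  then have "[(1 - int m) * int (\<Sum>{1..n}) = int (\<Sum>{1..n})] (mod int n)"
    by (simp add: cong_iff_dvd_diff)
  with False show ?thesis
    using triangular_cong[of n] cong_trans by auto
qed

theorem lemma2p4:
  fixes d n :: nat and H :: "nat list \<Rightarrow> nat" and T :: "nat list set"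
  assumes "d \<ge> 2" and "n \<ge> 1"
    and "latin_hypercube (d - 1) n H"
    and "transversal (d - 1) n H T"
  shows "[(\<Sum>\<alpha>\<in>T. Delta n H \<alpha>) =
          (if odd n \<or> even d then 0 else int n div 2)] (mod int n)"
proof -
  have "even d \<longleftrightarrow> odd (d - 1)"
    using assms(1) by simp
  then have "[(1 - int (d - 1)) * int (\<Sum>{1..n}) =
              (if odd n \<or> even d then 0 else int n div 2)] (mod int n)"
    using mult_triangular_cong[of "d - 1" n] by simp
  with transversal_Delta_sum_cong[OF assms(3,4)] show ?thesis
    by (rule cong_trans)
qed

end
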